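(* Let $\delta_1,\delta_2>0$, and let $\mathcal C_{\delta_1}$ and $\mathcal C_{\delta_2}$ be finite nonempty families of cubes from the $\delta_1$-grid and the $\delta_2$-grid of $\mathbb R^n$ respectively. Let $[L,X_f]$ and $[L,Y_f]$ be random affine contractions on $\mathbb R^n$ (with the same random linear part $L$) such that $X_f$ is uniformly distributed on $\bigcup\mathcal C_{\delta_1}$ and $Y_f$ is uniformly distributed on $\bigcup\mathcal C_{\delta_2}$. Then for every $m\in M_{\delta_1}=\{k\in\mathbb Z^n:C_{\delta_1}(k)\in\mathcal C_{\delta_1}\}$, the distribution of $\mathcal M^\#[L,Y_f]$ (computed with respect to $\delta_2$) equals the conditional distribution of $\mathcal M^\#[L,X_f]$ (computed with respect to $\delta_1$) given $X_f\in C_{\delta_1}(m)$.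
   Context: Let $d$ be a metric on $\mathbb R^n$ induced by a norm $\|\cdot\|$. For $\delta>0$ and $m\in\mathbb Z^n$, $C_\delta(m)=\prod_{j=1}^n[(m_j-\tfrac12)\delta,(m_j+\tfrac12)\delta)$; the $\delta$-grid is the set of all these cubes; $\mathcal D^n(\delta)=\{\delta m:m\in\mathbb Z^n\}$. The $\delta$-roundoff of $x$ is $\tilde x=\delta m$ where $x\in C_\delta(m)$, and of a map $w$ is $\tilde w(\tilde x)=\widetilde{w(\tilde x)}$ on $\mathcal D^n(\delta)$. A random affine contraction $[L,Z]$ is a pair of independent random variables, $Z\in\mathbb R^n$ and $L$ an $n\times n$ random matrix with induced operator norm $\|L\|<1$, viewed as the map $x\mapsto L(x-Z)+Z$. For nonempty $C$ with $\tilde w(C)\subset C$, $\Lambda\subset C$ is absorbing for $\tilde w$ in $C$ if every orbit of a point of $C$ eventually stays in $\Lambda$; the minimal absorbing set is the intersection of all absorbing sets in $\mathcal D^n(\delta)$ (it exists and is finite for roundoffs of contractions). $\mathcal M^\#[L,Z]$ denotes the cardinality of the minimal absorbing set of the roundoff of $[L,Z]$; here for $[L,X_f]$ the $\delta_1$-roundoff and for $[L,Y_f]$ the $\delta_2$-roundoff is used. *)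

theory Defs
  imports "HOL-Probability.Probability"
begin

definition is_norm :: "(real^'n \<Rightarrow> real) \<Rightarrow> bool" where
  "is_norm N \<longleftrightarrow> (\<forall>x. 0 \<le> N x) \<and> (\<forall>x. N x = 0 \<longleftrightarrow> x = 0)
     \<and> (\<forall>c x. N (c *\<^sub>R x) = \<bar>c\<bar> * N x) \<and> (\<forall>x y. N (x + y) \<le> N x + N y)"

definition op_norm :: "(real^'n \<Rightarrow> real) \<Rightarrow> real^'n^'n \<Rightarrow> real" where
  "op_norm N A = Sup {N (A *v x) / N x | x. x \<noteq> 0}"

definition grid_cube :: "real \<Rightarrow> int^'n \<Rightarrow> (real^'n) set" where
  "grid_cube \<delta> m = {x. \<forall>j. (of_int (m$j) - 1/2) * \<delta> \<le> x$j \<and> x$j < (of_int (m$j) + 1/2) * \<delta>}"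

definition grid_pt :: "real \<Rightarrow> int^'n \<Rightarrow> real^'n" where
  "grid_pt \<delta> m = (\<chi> j. \<delta> * of_int (m$j))"

definition grid :: "real \<Rightarrow> (real^'n) set" where
  "grid \<delta> = range (grid_pt \<delta>)"

definition roundoff :: "real \<Rightarrow> real^'n \<Rightarrow> real^'n" where
  "roundoff \<delta> x = grid_pt \<delta> (THE m. x \<in> grid_cube \<delta> m)"

definition roundoff_map :: "real \<Rightarrow> (real^'n \<Rightarrow> real^'n) \<Rightarrow> real^'n \<Rightarrow> real^'n" where
  "roundoff_map \<delta> w p = roundoff \<delta> (w p)"

definition absorbing :: "(real^'n) set \<Rightarrow> (real^'n \<Rightarrow> real^'n) \<Rightarrow> (real^'n) set \<Rightarrow> bool" where
  "absorbing C f \<Lambda> \<longleftrightarrow> \<Lambda> \<subseteq> C \<and> (\<forall>x\<in>C. \<exists>N. \<forall>k\<ge>N. (f ^^ k) x \<in> \<Lambda>)"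

definition min_absorbing :: "real \<Rightarrow> (real^'n \<Rightarrow> real^'n) \<Rightarrow> (real^'n) set" where
  "min_absorbing \<delta> w = \<Inter> {\<Lambda>. absorbing (grid \<delta>) (roundoff_map \<delta> w) \<Lambda>}"

definition aff_map :: "real^'n^'n \<Rightarrow> real^'n \<Rightarrow> real^'n \<Rightarrow> real^'n" where
  "aff_map A z x = A *v (x - z) + z"

definition Mcard :: "real \<Rightarrow> real^'n^'n \<Rightarrow> real^'n \<Rightarrow> nat" where
  "Mcard \<delta> A z = card (min_absorbing \<delta> (aff_map A z))"

end

theory Submission
  imports Defs
begin

text \<open>
  The chart \<open>u \<mapsto> \<delta> m + \<delta> u\<close> maps the 1-grid onto the \<open>\<delta>\<close>-grid and conjugates the
  1-roundoff of \<open>[A, u]\<close> to the \<open>\<delta>\<close>-roundoff of \<open>[A, \<delta> m + \<delta> u]\<close>, so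
  \<open>M\<^sup>#\<close> computed on the \<open>\<delta>\<close>-grid at \<open>\<delta> m + \<delta> u\<close> equals \<open>M\<^sup>#\<close> computed on the 1-grid at \<open>u\<close>;
  this is transparent once the minimal absorbing set is identified with the set of periodic points.
  Now let \<open>Z\<close> be uniform on a union of \<open>N\<close> cubes of the \<open>\<delta>\<close>-grid and independent of \<open>L\<close>.
  By Fubini and the invariance, for each of these cubes \<open>C\<close> the probability that
  \<open>M\<^sup>#[L, Z] \<in> K\<close> and \<open>Z \<in> C\<close> is \<open>\<rho>(K) / N\<close>, where \<open>\<rho>(K)\<close> is the probability that
  \<open>M\<^sup>#[L, U] \<in> K\<close> on the 1-grid for \<open>U\<close> uniform on the unit cube and independent of \<open>L\<close>.
  Summing over the cubes gives \<open>P(M\<^sup>#[L, Z] \<in> K) = \<rho>(K)\<close>, while \<open>P(Z \<in> C) = 1 / N\<close>;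
  so both sides of the theorem equal \<open>\<rho>(K)\<close>.
\<close>

section \<open>Periodic points and the minimal absorbing set\<close>

definition periodic_points :: "'a set \<Rightarrow> ('a \<Rightarrow> 'a) \<Rightarrow> 'a set" where
  "periodic_points C f = {p \<in> C. \<exists>k>0. (f ^^ k) p = p}"

lemma funpow_semiconj:
  assumes "\<And>x. g (h x) = h (f x)"
  shows "(g ^^ k) (h x) = h ((f ^^ k) x)"
  by (induction k) (simp_all add: assms)

lemma periodic_points_semiconj:
  assumes "inj h" and "\<And>x. g (h x) = h (f x)"
  shows "periodic_points (h ` C) g = h ` periodic_points C f"
proof -
  have "(g ^^ k) (h p) = h p \<longleftrightarrow> (f ^^ k) p = p" for k p
    using assms by (simp add: funpow_semiconj inj_eq)
  then show ?thesis
    unfolding periodic_points_def by blast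
qed

lemma funpow_mem_invariant:
  assumes "f ` C \<subseteq> C" and "x \<in> C"
  shows "(f ^^ k) x \<in> C"
  using assms by (induction k) auto

lemma funpow_mult_fixpoint:
  assumes "(f ^^ k) p = p"
  shows "(f ^^ (k * n)) p = p"
  using assms by (induction n) (simp_all add: funpow_add)

text \<open>An orbit meets a non-periodic point at most once.\<close>

lemma absorbing_Diff_nonperiodic:
  assumes inv: "f ` C \<subseteq> C" and p: "p \<notin> periodic_points C f"
  shows "absorbing C f (C - {p})"
  unfolding absorbing_def
proof (intro conjI ballI)
  fix x assume x: "x \<in> C"
  show "\<exists>N. \<forall>k\<ge>N. (f ^^ k) x \<in> C - {p}"
  proof (cases "\<exists>a. (f ^^ a) x = p")
    case True
    then obtain a where a: "(f ^^ a) x = p" by blast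
    have "p \<in> C"
      using a funpow_mem_invariant[OF inv x] by blast
    have "(f ^^ k) x \<noteq> p" if "k > a" for k
    proof
      assume "(f ^^ k) x = p"
      moreover have "(f ^^ k) x = (f ^^ (k - a)) p"
        using a that by (metis funpow_add comp_apply le_add_diff_inverse2 less_imp_le)
      ultimately have "(f ^^ (k - a)) p = p" and "k - a > 0"
        using that by simp_all
      with p \<open>p \<in> C\<close> show False
        unfolding periodic_points_def by blast
    qed
    then have "\<forall>k\<ge>Suc a. (f ^^ k) x \<in> C - {p}"
      using funpow_mem_invariant[OF inv x] by auto
    then show ?thesis
      by blast
  next
    case False
    then show ?thesis
      using funpow_mem_invariant[OF inv x] by blast
  qed
qed blast

lemma Inter_absorbing_eq_periodic_points:
  assumes inv: "f ` C \<subseteq> C"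
  shows "\<Inter> {\<Lambda>. absorbing C f \<Lambda>} = periodic_points C f"
proof
  have "absorbing C f C"
    unfolding absorbing_def using funpow_mem_invariant[OF inv] by blast
  then show "\<Inter> {\<Lambda>. absorbing C f \<Lambda>} \<subseteq> periodic_points C f"
    using absorbing_Diff_nonperiodic[OF inv] by blast
next
  show "periodic_points C f \<subseteq> \<Inter> {\<Lambda>. absorbing C f \<Lambda>}"
  proof (intro subsetI InterI, unfold mem_Collect_eq)
    fix p \<Lambda> assume p: "p \<in> periodic_points C f" and "absorbing C f \<Lambda>"
    then obtain N where N: "\<forall>k\<ge>N. (f ^^ k) p \<in> \<Lambda>" and "p \<in> C"
      unfolding absorbing_def periodic_points_def by blast
    from p obtain k where "k > 0" and "(f ^^ k) p = p"
      unfolding periodic_points_def by blast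
    then have "(f ^^ (k * N)) p = p" and "k * N \<ge> N"
      by (simp_all add: funpow_mult_fixpoint)
    then show "p \<in> \<Lambda>"
      using N by metis
  qed
qed

section \<open>Rescaling the grid\<close>

lemma grid_cube_iff:
  assumes "\<delta> > 0"
  shows "x \<in> grid_cube \<delta> m \<longleftrightarrow> m = (\<chi> j. \<lfloor>x$j / \<delta> + 1/2\<rfloor>)"
proof -
  have "(of_int (m$j) - 1/2) * \<delta> \<le> x$j \<and> x$j < (of_int (m$j) + 1/2) * \<delta> \<longleftrightarrow>
        m$j = \<lfloor>x$j / \<delta> + 1/2\<rfloor>" for j
  proof -
    have "(of_int (m$j) - 1/2) * \<delta> \<le> x$j \<and> x$j < (of_int (m$j) + 1/2) * \<delta> \<longleftrightarrow>
        of_int (m$j) \<le> x$j / \<delta> + 1/2 \<and> x$j / \<delta> + 1/2 < of_int (m$j) + 1"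
      using assms by (simp add: field_simps)
    then show ?thesis
      by (metis floor_eq_iff)
  qed
  then show ?thesis
    unfolding grid_cube_def vec_eq_iff by auto
qed

lemma ex_grid_cube:
  assumes "\<delta> > 0"
  shows "\<exists>m. x \<in> grid_cube \<delta> m"
  using assms by (simp add: grid_cube_iff)

lemma roundoff_eq_grid_pt:
  assumes "\<delta> > 0" and "x \<in> grid_cube \<delta> m"
  shows "roundoff \<delta> x = grid_pt \<delta> m"
  using assms by (simp add: roundoff_def grid_cube_iff)

lemma grid_cube_disjoint:
  assumes "\<delta> > 0" and "a \<noteq> b"
  shows "grid_cube \<delta> a \<inter> grid_cube \<delta> b = {}"
  using assms by (auto simp: grid_cube_iff)

definition grid_chart :: "real \<Rightarrow> int^'n \<Rightarrow> real^'n \<Rightarrow> real^'n" where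
  "grid_chart \<delta> m u = grid_pt \<delta> m + \<delta> *\<^sub>R u"

lemma inj_grid_chart: "\<delta> \<noteq> 0 \<Longrightarrow> inj (grid_chart \<delta> m)"
  by (rule injI) (simp add: grid_chart_def)

lemma grid_chart_grid_pt: "grid_chart \<delta> m (grid_pt 1 b) = grid_pt \<delta> (m + b)"
  by (simp add: grid_chart_def grid_pt_def vec_eq_iff algebra_simps)

lemma grid_chart_mem_grid_cube_iff:
  assumes "\<delta> > 0"
  shows "grid_chart \<delta> m u \<in> grid_cube \<delta> (m + b) \<longleftrightarrow> u \<in> grid_cube 1 b"
proof -
  have "(of_int (m$j + b$j) - 1/2) * \<delta> \<le> \<delta> * of_int (m$j) + \<delta> * u$j \<longleftrightarrow>
          (of_int (b$j) - 1/2) * \<delta> \<le> u$j * \<delta>"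
    and "\<delta> * of_int (m$j) + \<delta> * u$j < (of_int (m$j + b$j) + 1/2) * \<delta> \<longleftrightarrow>
          u$j * \<delta> < (of_int (b$j) + 1/2) * \<delta>" for j
    by (simp_all add: algebra_simps)
  then show ?thesis
    using assms by (simp add: grid_chart_def grid_cube_def grid_pt_def)
qed

lemma roundoff_grid_chart:
  assumes "\<delta> > 0"
  shows "roundoff \<delta> (grid_chart \<delta> m u) = grid_chart \<delta> m (roundoff 1 u)"
proof -
  obtain b where "u \<in> grid_cube 1 b"
    using ex_grid_cube[of 1] by auto
  then show ?thesis
    using assms by (simp add: roundoff_eq_grid_pt grid_chart_mem_grid_cube_iff grid_chart_grid_pt)
qed

lemma grid_eq_image_grid_chart: "grid \<delta> = grid_chart \<delta> m ` grid 1"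
proof -
  have "range (grid_pt \<delta>) = range (\<lambda>b. grid_pt \<delta> (m + b))"
    by (metis surj_plus image_image)
  then show ?thesis
    by (simp add: grid_def image_image grid_chart_grid_pt)
qed

lemma aff_map_grid_chart:
  "aff_map A (grid_chart \<delta> m z) (grid_chart \<delta> m p) = grid_chart \<delta> m (aff_map A z p)"
  by (simp add: aff_map_def grid_chart_def scaleR_diff_right[symmetric] matrix_vector_mult_scaleR
      scaleR_add_right)

lemma Mcard_eq_card_periodic_points:
  "Mcard \<delta> A z = card (periodic_points (grid \<delta>) (roundoff_map \<delta> (aff_map A z)))"
proof -
  have "roundoff_map \<delta> (aff_map A z) ` grid \<delta> \<subseteq> grid \<delta>"
    by (auto simp: roundoff_map_def roundoff_def grid_def)
  then show ?thesis
    by (simp add: Mcard_def min_absorbing_def Inter_absorbing_eq_periodic_points)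
qed

lemma Mcard_grid_chart:
  assumes "\<delta> > 0"
  shows "Mcard \<delta> A (grid_chart \<delta> m z) = Mcard 1 A z"
proof -
  have "roundoff_map \<delta> (aff_map A (grid_chart \<delta> m z)) (grid_chart \<delta> m p)
      = grid_chart \<delta> m (roundoff_map 1 (aff_map A z) p)" for p
    using assms by (simp add: roundoff_map_def aff_map_grid_chart roundoff_grid_chart)
  then have "periodic_points (grid \<delta>) (roundoff_map \<delta> (aff_map A (grid_chart \<delta> m z)))
      = grid_chart \<delta> m ` periodic_points (grid 1) (roundoff_map 1 (aff_map A z))"
    unfolding grid_eq_image_grid_chart[of \<delta> m]
    using assms by (intro periodic_points_semiconj inj_grid_chart) simp_all
  then show ?thesis
    using assms by (simp add: Mcard_eq_card_periodic_points card_image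
        inj_on_subset[OF inj_grid_chart])
qed

lemma Mcard_rescale:
  assumes "\<delta> > 0"
  shows "Mcard \<delta> A z = Mcard 1 A (z /\<^sub>R \<delta>)"
proof -
  have "grid_chart \<delta> 0 (z /\<^sub>R \<delta>) = z"
    using assms by (simp add: grid_chart_def grid_pt_def vec_eq_iff)
  then show ?thesis
    using Mcard_grid_chart[OF assms, of A 0 "z /\<^sub>R \<delta>"] by simp
qed

section \<open>Measurability of the cardinality of the minimal absorbing set\<close>

text \<open>
  A set of cardinality \<open>k + 1\<close> is the set of a distinct list of length \<open>k + 1\<close>, and lists over
  a countable type form a countable type.
\<close>

lemma measurable_card_Collect_countable:
  fixes Q :: "'a \<Rightarrow> 'i::countable \<Rightarrow> bool"
  assumes [measurable]: "\<And>i. Measurable.pred M (\<lambda>x. Q x i)"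
  shows "(\<lambda>x. card {i. Q x i}) \<in> M \<rightarrow>\<^sub>M count_space UNIV"
proof -
  have card_Suc: "card {i. Q x i} = Suc k \<longleftrightarrow>
      (\<exists>xs. distinct xs \<and> length xs = Suc k \<and> (\<forall>i. Q x i \<longleftrightarrow> i \<in> set xs))" for x k
  proof
    assume card: "card {i. Q x i} = Suc k"
    then have "finite {i. Q x i}"
      by (simp add: card_ge_0_finite)
    then obtain xs where "set xs = {i. Q x i}" and "distinct xs"
      using finite_distinct_list by blast
    then show "\<exists>xs. distinct xs \<and> length xs = Suc k \<and> (\<forall>i. Q x i \<longleftrightarrow> i \<in> set xs)"
      using card distinct_card by fastforce
  next
    assume "\<exists>xs. distinct xs \<and> length xs = Suc k \<and> (\<forall>i. Q x i \<longleftrightarrow> i \<in> set xs)"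
    then obtain xs where "distinct xs" "length xs = Suc k" "{i. Q x i} = set xs"
      by auto
    then show "card {i. Q x i} = Suc k"
      by (simp add: distinct_card)
  qed
  have card_0: "card {i. Q x i} = 0 \<longleftrightarrow> \<not> (\<exists>k. card {i. Q x i} = Suc k)" for x
    by (cases "card {i. Q x i}") auto
  have "Measurable.pred M (\<lambda>x. card {i. Q x i} = k)" for k
    by (cases k) (simp_all only: card_0 card_Suc, measurable)
  then have "(\<lambda>x. card {i. Q x i}) -` {k} \<inter> space M \<in> sets M" for k
    unfolding pred_def by (simp add: vimage_def Int_def conj_commute)
  then show ?thesis
    by (simp add: measurable_count_space_eq2_countable)
qed

lemma borel_measurable_vec_nth [measurable (raw)]:
  fixes f :: "'a \<Rightarrow> 'b::topological_space^'n"
  assumes "f \<in> borel_measurable M"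
  shows "(\<lambda>x. f x $ j) \<in> borel_measurable M"
  using measurable_compose[OF assms
      borel_measurable_continuous_onI[OF continuous_on_component[OF continuous_on_id]]]
  by simp

lemma borel_measurable_vec_lambda [measurable (raw)]:
  fixes f :: "'n::finite \<Rightarrow> 'a \<Rightarrow> real"
  assumes "\<And>j. f j \<in> borel_measurable M"
  shows "(\<lambda>x. \<chi> j. f j x) \<in> borel_measurable M"
  unfolding borel_measurable_euclidean_space[where 'c="real^'n"]
  using assms by (auto simp: Basis_vec_def inner_axis)

lemma borel_measurable_matrix_vector_mult [measurable (raw)]:
  fixes A :: "'a \<Rightarrow> real^'n^'m" and v :: "'a \<Rightarrow> real^'n"
  assumes [measurable]: "A \<in> borel_measurable M" "v \<in> borel_measurable M"
  shows "(\<lambda>x. A x *v v x) \<in> borel_measurable M"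
  unfolding matrix_vector_mult_def by measurable

lemma roundoff_1_eq: "roundoff 1 x = (\<chi> j. of_int \<lfloor>x$j + 1/2\<rfloor>)"
  by (simp add: roundoff_eq_grid_pt grid_cube_iff grid_pt_def)

lemma borel_measurable_roundoff_1 [measurable (raw)]:
  assumes [measurable]: "f \<in> borel_measurable M"
  shows "(\<lambda>x. roundoff 1 (f x)) \<in> borel_measurable M"
  unfolding roundoff_1_eq by measurable

lemma borel_measurable_roundoff_orbit [measurable (raw)]:
  assumes [measurable]: "L \<in> borel_measurable M" "Z \<in> borel_measurable M"
  shows "(\<lambda>\<omega>. (roundoff_map 1 (aff_map (L \<omega>) (Z \<omega>)) ^^ k) p) \<in> borel_measurable M"
proof (induction k)
  case (Suc k)
  let ?F = "\<lambda>\<omega>. roundoff_map 1 (aff_map (L \<omega>) (Z \<omega>))"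
  have step: "(?F \<omega> ^^ Suc k) p = roundoff 1 (L \<omega> *v ((?F \<omega> ^^ k) p - Z \<omega>) + Z \<omega>)" for \<omega>
    by (simp add: roundoff_map_def aff_map_def)
  note [measurable] = Suc
  show ?case
    unfolding step by measurable
qed simp

lemma card_eq_card_preimage:
  assumes "inj g" and "S \<subseteq> range g"
  shows "card S = card {i. g i \<in> S}"
proof -
  have "S = g ` {i. g i \<in> S}"
    using assms by blast
  then show ?thesis
    using assms by (metis card_image inj_on_subset subset_UNIV)
qed

lemma measurable_Mcard:
  assumes "\<delta> > 0" and [measurable]: "L \<in> borel_measurable M" "Z \<in> borel_measurable M"
  shows "(\<lambda>\<omega>. Mcard \<delta> (L \<omega>) (Z \<omega>)) \<in> M \<rightarrow>\<^sub>M count_space UNIV"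
proof -
  let ?F = "\<lambda>\<omega>. roundoff_map 1 (aff_map (L \<omega>) (Z \<omega> /\<^sub>R \<delta>))"
  have "inj (grid_pt 1 :: int^'n \<Rightarrow> real^'n)"
    by (rule injI) (simp add: grid_pt_def vec_eq_iff)
  then have "Mcard \<delta> (L \<omega>) (Z \<omega>) = card {b. grid_pt 1 b \<in> periodic_points (grid 1) (?F \<omega>)}" for \<omega>
    unfolding Mcard_rescale[OF assms(1)] unfolding Mcard_eq_card_periodic_points
    by (rule card_eq_card_preimage) (auto simp: periodic_points_def grid_def)
  also have "grid_pt 1 b \<in> periodic_points (grid 1) (?F \<omega>) \<longleftrightarrow>
      (\<exists>k. (?F \<omega> ^^ Suc k) (grid_pt 1 b) = grid_pt 1 b)" for \<omega> b
    by (auto simp: periodic_points_def grid_def gr0_conv_Suc simp del: funpow.simps)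
  moreover have "(\<lambda>\<omega>. card {b. \<exists>k. (?F \<omega> ^^ Suc k) (grid_pt 1 b) = grid_pt 1 b})
      \<in> M \<rightarrow>\<^sub>M count_space UNIV"
    by (intro measurable_card_Collect_countable) measurable
  ultimately show ?thesis
    by simp
qed

lemma pred_Mcard_fst_snd:
  assumes "\<delta> > 0"
  shows "Measurable.pred (borel \<Otimes>\<^sub>M borel)
           (\<lambda>x :: (real^'n^'n) \<times> (real^'n). Mcard \<delta> (fst x) (snd x) \<in> K)"
  using measurable_compose[OF measurable_Mcard[OF assms measurable_fst measurable_snd],
      of "\<lambda>n. n \<in> K" "count_space UNIV"]
  by simp

lemma sets_grid_cube [measurable]: "grid_cube \<delta> m \<in> sets borel"
proof -
  have "grid_cube \<delta> m =
      (\<Inter>j. {x. (of_int (m$j) - 1/2) * \<delta> \<le> x$j} \<inter> {x. x$j < (of_int (m$j) + 1/2) * \<delta>})"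
    by (auto simp: grid_cube_def)
  also have "\<dots> \<in> sets borel"
    by (intro sets.countable_INT' sets.Int borel_closed borel_open closed_Collect_le
        open_Collect_less continuous_intros) auto
  finally show ?thesis .
qed

lemma emeasure_unit_grid_cube: "emeasure lborel (grid_cube 1 0 :: (real^'n) set) = 1"
proof -
  let ?a = "(\<chi> j. -1/2) :: real^'n" and ?b = "(\<chi> j. 1/2) :: real^'n"
  have "box ?a ?b \<subseteq> grid_cube 1 0" and "grid_cube 1 0 \<subseteq> cbox ?a ?b"
    by (auto simp: mem_box_cart grid_cube_def less_imp_le)
  then have "emeasure lborel (box ?a ?b) \<le> emeasure lborel (grid_cube 1 0 :: (real^'n) set)"
    and "emeasure lborel (grid_cube 1 0 :: (real^'n) set) \<le> emeasure lborel (cbox ?a ?b)"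
    by (simp_all add: emeasure_mono)
  moreover have "emeasure lborel (box ?a ?b) = 1" and "emeasure lborel (cbox ?a ?b) = 1"
    by (simp_all add: emeasure_lborel_box_eq emeasure_lborel_cbox_eq Basis_vec_def inner_axis
        prod.neutral)
  ultimately show ?thesis
    by simp
qed

lemma emeasure_lborel_grid_chart_vimage:
  assumes "\<delta> > 0" and "S \<in> sets borel"
  shows "emeasure lborel S
       = ennreal (\<delta> ^ DIM(real^'n)) * emeasure lborel (grid_chart \<delta> m -` S :: (real^'n) set)"
proof -
  have [measurable]: "grid_chart \<delta> m \<in> borel_measurable borel"
    unfolding grid_chart_def[abs_def] by measurable
  have "lborel = density (distr lborel borel (grid_chart \<delta> m)) (\<lambda>_. \<bar>\<delta>\<bar> ^ DIM(real^'n))"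
    unfolding grid_chart_def[abs_def] by (rule lborel_affine) (use assms in simp)
  then have "emeasure lborel S
      = emeasure (density (distr lborel borel (grid_chart \<delta> m)) (\<lambda>_. \<bar>\<delta>\<bar> ^ DIM(real^'n))) S"
    by (rule arg_cong)
  then show ?thesis
    using assms by (simp add: emeasure_density_const emeasure_distr)
qed

lemma emeasure_Mcard_in_grid_cube:
  assumes "\<delta> > 0"
  shows "emeasure lborel {z \<in> grid_cube \<delta> m. Mcard \<delta> A z \<in> K}
       = ennreal (\<delta> ^ DIM(real^'n))
         * emeasure lborel {u \<in> grid_cube 1 0 :: (real^'n) set. Mcard 1 A u \<in> K}"
proof -
  have [measurable]: "(\<lambda>z. Mcard \<delta> A z) \<in> borel \<rightarrow>\<^sub>M count_space UNIV"
    using measurable_Mcard[OF assms, of "\<lambda>_. A" borel "\<lambda>z. z"] by simp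
  have S: "{z \<in> grid_cube \<delta> m. Mcard \<delta> A z \<in> K} \<in> sets borel"
    by measurable
  have "grid_chart \<delta> m -` {z \<in> grid_cube \<delta> m. Mcard \<delta> A z \<in> K}
      = {u \<in> grid_cube 1 0. Mcard 1 A u \<in> K}"
    using grid_chart_mem_grid_cube_iff[OF assms, of m _ 0] by (simp add: Mcard_grid_chart[OF assms])
  then show ?thesis
    using emeasure_lborel_grid_chart_vimage[OF assms S, of m] by (simp only:)
qed

lemma emeasure_grid_cube:
  assumes "\<delta> > 0"
  shows "emeasure lborel (grid_cube \<delta> m :: (real^'n) set) = ennreal (\<delta> ^ DIM(real^'n))"
proof -
  have "grid_chart \<delta> m -` grid_cube \<delta> m = grid_cube 1 0"
    using grid_chart_mem_grid_cube_iff[OF assms, of m _ 0] by auto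
  then show ?thesis
    using emeasure_lborel_grid_chart_vimage[OF assms sets_grid_cube[of \<delta> m], of m]
    by (simp add: emeasure_unit_grid_cube)
qed

lemma disjoint_family_on_grid_cubes:
  assumes "\<delta> > 0" and "\<C> \<subseteq> range (grid_cube \<delta>)"
  shows "disjoint_family_on (\<lambda>C. C) \<C>"
  unfolding disjoint_family_on_def
proof (intro ballI impI)
  fix C D assume "C \<in> \<C>" "D \<in> \<C>" "C \<noteq> D"
  moreover obtain a b where "C = grid_cube \<delta> a" and "D = grid_cube \<delta> b"
    using assms(2) \<open>C \<in> \<C>\<close> \<open>D \<in> \<C>\<close> by (meson imageE subsetD)
  ultimately show "C \<inter> D = {}"
    using grid_cube_disjoint[OF assms(1), of a b] by fastforce
qed

lemma emeasure_Union_grid_cubes: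
  fixes \<C> :: "(real^'n) set set"
  assumes "\<delta> > 0" and "finite \<C>" and "\<C> \<subseteq> range (grid_cube \<delta>)"
  shows "emeasure lborel (\<Union>\<C>) = of_nat (card \<C>) * ennreal (\<delta> ^ DIM(real^'n))"
proof -
  have "emeasure lborel (\<Union>C\<in>\<C>. C) = (\<Sum>C\<in>\<C>. emeasure lborel C)"
    using assms by (intro sum_emeasure[symmetric] disjoint_family_on_grid_cubes) auto
  also have "\<dots> = (\<Sum>C\<in>\<C>. ennreal (\<delta> ^ DIM(real^'n)))"
    using assms(3) by (intro sum.cong) (auto simp: emeasure_grid_cube[OF assms(1)])
  finally show ?thesis
    by simp
qed

lemma (in prob_space) distr_pair_eq_pair_measure:
  assumes X: "random_variable S X" and Y: "random_variable T Y"
    and indep: "indep_set {X -` A \<inter> space M | A. A \<in> sets S} {Y -` B \<inter> space M | B. B \<in> sets T}"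
  shows "distr M (S \<Otimes>\<^sub>M T) (\<lambda>\<omega>. (X \<omega>, Y \<omega>)) = distr M S X \<Otimes>\<^sub>M distr M T Y"
proof -
  interpret X: prob_space "distr M S X" using X by (rule prob_space_distr)
  interpret Y: prob_space "distr M T Y" using Y by (rule prob_space_distr)
  interpret XY: pair_prob_space "distr M S X" "distr M T Y" ..
  show ?thesis
  proof (rule pair_measure_eqI[symmetric])
    fix A B assume A: "A \<in> sets (distr M S X)" and B: "B \<in> sets (distr M T Y)"
    have "(\<lambda>\<omega>. (X \<omega>, Y \<omega>)) -` (A \<times> B) \<inter> space M = (X -` A \<inter> space M) \<inter> (Y -` B \<inter> space M)"
      by auto
    moreover have "prob ((X -` A \<inter> space M) \<inter> (Y -` B \<inter> space M))
        = prob (X -` A \<inter> space M) * prob (Y -` B \<inter> space M)"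
      using A B by (intro indep_setD[OF indep]) auto
    ultimately show "emeasure (distr M S X) A * emeasure (distr M T Y) B
        = emeasure (distr M (S \<Otimes>\<^sub>M T) (\<lambda>\<omega>. (X \<omega>, Y \<omega>))) (A \<times> B)"
      using A B X Y by (simp add: emeasure_distr measurable_Pair emeasure_eq_measure ennreal_mult)
  qed (simp_all add: XY.sigma_finite_measure_axioms X.sigma_finite_measure_axioms
      Y.sigma_finite_measure_axioms)
qed

lemma (in prob_space) emeasure_pair_indep_set:
  assumes X: "random_variable S X" and Y: "random_variable T Y"
    and indep: "indep_set {X -` A \<inter> space M | A. A \<in> sets S} {Y -` B \<inter> space M | B. B \<in> sets T}"
    and E: "E \<in> sets (S \<Otimes>\<^sub>M T)"
  shows "emeasure M {\<omega> \<in> space M. (X \<omega>, Y \<omega>) \<in> E}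
       = (\<integral>\<^sup>+x. emeasure (distr M T Y) (Pair x -` E) \<partial>distr M S X)"
proof -
  interpret Y: prob_space "distr M T Y" using Y by (rule prob_space_distr)
  have "emeasure M {\<omega> \<in> space M. (X \<omega>, Y \<omega>) \<in> E} = emeasure (distr M (S \<Otimes>\<^sub>M T) (\<lambda>\<omega>. (X \<omega>, Y \<omega>))) E"
    using E X Y by (simp add: emeasure_distr measurable_Pair vimage_def Int_def conj_commute)
  also have "\<dots> = emeasure (distr M S X \<Otimes>\<^sub>M distr M T Y) E"
    by (simp only: distr_pair_eq_pair_measure[OF X Y indep])
  also have "\<dots> = (\<integral>\<^sup>+x. emeasure (distr M T Y) (Pair x -` E) \<partial>distr M S X)"
    using E by (intro Y.emeasure_pair_measure_alt) (simp cong: sets_pair_measure_cong)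
  finally show ?thesis .
qed

section \<open>Random affine maps with uniformly distributed centre\<close>

text \<open>
  \<open>Mcard_law L M K\<close> is the probability that \<open>M\<^sup>#[L, U] \<in> K\<close> on the 1-grid, for \<open>U\<close> uniform on
  the unit cube \<open>C\<^sub>1(0)\<close> and independent of \<open>L\<close>.
\<close>

definition Mcard_law :: "('a \<Rightarrow> real^'n^'n) \<Rightarrow> 'a measure \<Rightarrow> nat set \<Rightarrow> real" where
  "Mcard_law L M K =
     enn2real (\<integral>\<^sup>+A. emeasure lborel {u \<in> grid_cube 1 0. Mcard 1 A u \<in> K} \<partial>distr M borel L)"

lemma borel_measurable_emeasure_Mcard_unit_cube:
  "(\<lambda>A :: real^'n^'n. emeasure lborel {u \<in> grid_cube 1 0 :: (real^'n) set. Mcard 1 A u \<in> K})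
     \<in> borel_measurable borel"
proof -
  note [measurable] = pred_Mcard_fst_snd[of 1 K, simplified]
  have "{x \<in> space (borel \<Otimes>\<^sub>M borel). Mcard 1 (fst x) (snd x) \<in> K \<and> snd x \<in> grid_cube 1 0}
      \<in> sets (borel \<Otimes>\<^sub>M lborel)"
    unfolding sets_pair_measure_cong[OF refl sets_lborel] by measurable
  from sigma_finite_measure.measurable_emeasure_Pair[OF sigma_finite_lborel this] show ?thesis
    by (simp add: vimage_def space_pair_measure conj_commute)
qed

lemma nn_integral_emeasure_Mcard_unit_cube:
  fixes L :: "'a \<Rightarrow> real^'n^'n"
  assumes "prob_space M" and "L \<in> borel_measurable M"
  shows "(\<integral>\<^sup>+A. emeasure lborel {u \<in> grid_cube 1 0. Mcard 1 A u \<in> K} \<partial>distr M borel L)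
       = ennreal (Mcard_law L M K)"
proof -
  have le: "emeasure lborel {u \<in> grid_cube 1 0. Mcard 1 A u \<in> K}
      \<le> emeasure lborel (grid_cube 1 0 :: (real^'n) set)"
    for A :: "real^'n^'n"
    by (rule emeasure_mono) auto
  interpret prob_space "distr M borel L"
    using assms by (rule prob_space.prob_space_distr)
  have "(\<integral>\<^sup>+A. emeasure lborel {u \<in> grid_cube 1 0. Mcard 1 A u \<in> K} \<partial>distr M borel L)
      \<le> (\<integral>\<^sup>+A. emeasure lborel (grid_cube 1 0 :: (real^'n) set) \<partial>distr M borel L)"
    using le by (intro nn_integral_mono)
  also have "\<dots> = 1"
    using emeasure_space_1 by (simp add: emeasure_unit_grid_cube)
  finally have "(\<integral>\<^sup>+A. emeasure lborel {u \<in> grid_cube 1 0. Mcard 1 A u \<in> K} \<partial>distr M borel L) < \<top>"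
    using ennreal_one_less_top by (rule le_less_trans)
  then show ?thesis
    unfolding Mcard_law_def by simp
qed

lemma Mcard_law_UNIV:
  fixes L :: "'a \<Rightarrow> real^'n^'n"
  assumes "prob_space M" and "L \<in> borel_measurable M"
  shows "Mcard_law L M UNIV = 1"
proof -
  interpret prob_space "distr M borel L"
    using assms by (rule prob_space.prob_space_distr)
  show ?thesis
    using emeasure_space_1 by (simp add: Mcard_law_def emeasure_unit_grid_cube)
qed

locale uniform_grid_cubes = prob_space M for M :: "'a measure" +
  fixes L :: "'a \<Rightarrow> real^'n^'n" and Z :: "'a \<Rightarrow> real^'n"
    and \<delta> :: real and \<C> :: "(real^'n) set set"
  assumes delta_pos: "\<delta> > 0"
    and finite_cubes: "finite \<C>" and cubes_nonempty: "\<C> \<noteq> {}"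
    and cubes_in_grid: "\<C> \<subseteq> range (grid_cube \<delta>)"
    and measurable_L [measurable]: "L \<in> borel_measurable M"
    and measurable_Z [measurable]: "Z \<in> borel_measurable M"
    and indep_L_Z: "indep_set {L -` A \<inter> space M | A. A \<in> sets borel}
                              {Z -` B \<inter> space M | B. B \<in> sets borel}"
    and uniform_Z: "distr M lborel Z = uniform_measure lborel (\<Union>\<C>)"
begin

lemma measurable_Mcard_L_Z [measurable]: "(\<lambda>\<omega>. Mcard \<delta> (L \<omega>) (Z \<omega>)) \<in> M \<rightarrow>\<^sub>M count_space UNIV"
  using delta_pos by (rule measurable_Mcard) measurable

lemma cube_in_sets:
  assumes "C \<in> \<C>"
  shows "C \<in> sets borel"
proof -
  obtain m where "C = grid_cube \<delta> m"
    using assms cubes_in_grid by (meson imageE subsetD)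
  then show ?thesis
    by simp
qed

lemma Union_cubes_sets [measurable]: "\<Union>\<C> \<in> sets borel"
  using finite_cubes by (rule sets.finite_Union) (use cube_in_sets in blast)

lemma card_cubes_pos: "card \<C> > 0"
  using finite_cubes cubes_nonempty by (simp add: card_gt_0_iff)

lemma emeasure_distr_Z_Mcard_in_grid_cube:
  assumes "grid_cube \<delta> m \<in> \<C>"
  shows "emeasure (distr M borel Z) {z \<in> grid_cube \<delta> m. Mcard \<delta> A z \<in> K}
       = emeasure lborel {u \<in> grid_cube 1 0. Mcard 1 A u \<in> K} / of_nat (card \<C>)"
proof -
  let ?S = "{z \<in> grid_cube \<delta> m. Mcard \<delta> A z \<in> K}"
  let ?c = "ennreal (\<delta> ^ DIM(real^'n))"
  have [measurable]: "(\<lambda>z. Mcard \<delta> A z) \<in> borel \<rightarrow>\<^sub>M count_space UNIV"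
    using measurable_Mcard[OF delta_pos, of "\<lambda>_. A" borel "\<lambda>z. z"] by simp
  have "distr M borel Z = distr M lborel Z"
    by (rule distr_cong) simp_all
  then have "distr M borel Z = uniform_measure lborel (\<Union>\<C>)"
    using uniform_Z by (simp only:)
  moreover have "\<Union>\<C> \<inter> ?S = ?S"
    using assms by blast
  moreover have "?S \<in> sets borel"
    by measurable
  ultimately have "emeasure (distr M borel Z) ?S = emeasure lborel ?S / emeasure lborel (\<Union>\<C>)"
    by (simp add: emeasure_uniform_measure)
  also have "\<dots> = emeasure lborel {u \<in> grid_cube 1 0. Mcard 1 A u \<in> K} * ?c / (of_nat (card \<C>) * ?c)"
    unfolding emeasure_Mcard_in_grid_cube[OF delta_pos]
      emeasure_Union_grid_cubes[OF delta_pos finite_cubes cubes_in_grid]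
    by (simp only: mult.commute[of ?c])
  also have "\<dots> = emeasure lborel {u \<in> grid_cube 1 0. Mcard 1 A u \<in> K} / of_nat (card \<C>)"
    using delta_pos by (intro divide_mult_eq) simp_all
  finally show ?thesis .
qed

lemma measure_Mcard_in_grid_cube:
  assumes "grid_cube \<delta> m \<in> \<C>"
  shows "measure M {\<omega> \<in> space M. Mcard \<delta> (L \<omega>) (Z \<omega>) \<in> K \<and> Z \<omega> \<in> grid_cube \<delta> m}
       = Mcard_law L M K / card \<C>"
proof -
  let ?S = "{x \<in> space (borel \<Otimes>\<^sub>M borel). Mcard \<delta> (fst x) (snd x) \<in> K \<and> snd x \<in> grid_cube \<delta> m}"
  let ?q = "\<lambda>A. emeasure lborel {u \<in> grid_cube 1 0. Mcard 1 A u \<in> K}"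
  note [measurable] = pred_Mcard_fst_snd[OF delta_pos] borel_measurable_emeasure_Mcard_unit_cube
  have "?S \<in> sets (borel \<Otimes>\<^sub>M borel)"
    by measurable
  then have "emeasure M {\<omega> \<in> space M. (L \<omega>, Z \<omega>) \<in> ?S}
      = (\<integral>\<^sup>+A. emeasure (distr M borel Z) (Pair A -` ?S) \<partial>distr M borel L)"
    by (rule emeasure_pair_indep_set[OF measurable_L measurable_Z indep_L_Z])
  also have "\<dots> = (\<integral>\<^sup>+A. ?q A / of_nat (card \<C>) \<partial>distr M borel L)"
    using assms by (simp add: space_pair_measure vimage_def conj_commute
        emeasure_distr_Z_Mcard_in_grid_cube[symmetric])
  also have "\<dots> = ennreal (Mcard_law L M K) / of_nat (card \<C>)"
    by (simp add: nn_integral_divide nn_integral_emeasure_Mcard_unit_cube prob_space_axioms)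
  also have "\<dots> = ennreal (Mcard_law L M K / card \<C>)"
    using card_cubes_pos by (simp add: divide_ennreal ennreal_of_nat_eq_real_of_nat enn2real_nonneg
        Mcard_law_def)
  finally show ?thesis
    by (simp add: measure_def space_pair_measure Mcard_law_def)
qed

lemma measure_Mcard:
  "measure M {\<omega> \<in> space M. Mcard \<delta> (L \<omega>) (Z \<omega>) \<in> K} = Mcard_law L M K"
proof -
  let ?E = "\<lambda>C. {\<omega> \<in> space M. Mcard \<delta> (L \<omega>) (Z \<omega>) \<in> K \<and> Z \<omega> \<in> C}"
  have "AE x in distr M lborel Z. x \<in> \<Union>\<C>"
    unfolding uniform_Z by (rule AE_uniform_measureI) simp_all
  moreover have "(AE x in distr M lborel Z. x \<in> \<Union>\<C>) \<longleftrightarrow> (AE \<omega> in M. Z \<omega> \<in> \<Union>\<C>)"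
    by (rule AE_distr_iff) measurable
  ultimately have "AE \<omega> in M. Z \<omega> \<in> \<Union>\<C>"
    by simp
  then have "measure M {\<omega> \<in> space M. Mcard \<delta> (L \<omega>) (Z \<omega>) \<in> K} = measure M (\<Union>C\<in>\<C>. ?E C)"
    using cube_in_sets by (intro measure_eq_AE) (auto intro!: sets.finite_UN finite_cubes)
  also have "\<dots> = (\<Sum>C\<in>\<C>. measure M (?E C))"
  proof (rule measure_finite_Union)
    show "disjoint_family_on ?E \<C>"
      using disjoint_family_on_grid_cubes[OF delta_pos cubes_in_grid]
      unfolding disjoint_family_on_def by blast
  qed (use finite_cubes cube_in_sets in auto)
  also have "\<dots> = (\<Sum>C\<in>\<C>. Mcard_law L M K / card \<C>)"
  proof (rule sum.cong)
    fix C assume "C \<in> \<C>"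
    moreover obtain m where "C = grid_cube \<delta> m"
      using \<open>C \<in> \<C>\<close> cubes_in_grid by (meson imageE subsetD)
    ultimately show "measure M (?E C) = Mcard_law L M K / card \<C>"
      using measure_Mcard_in_grid_cube by simp
  qed simp
  also have "\<dots> = Mcard_law L M K"
    using card_cubes_pos by simp
  finally show ?thesis .
qed

lemma measure_Mcard_cond_grid_cube:
  assumes "grid_cube \<delta> m \<in> \<C>"
  shows "measure M {\<omega> \<in> space M. Mcard \<delta> (L \<omega>) (Z \<omega>) \<in> K \<and> Z \<omega> \<in> grid_cube \<delta> m}
         / measure M {\<omega> \<in> space M. Z \<omega> \<in> grid_cube \<delta> m}
       = Mcard_law L M K"
  using measure_Mcard_in_grid_cube[OF assms, of K] measure_Mcard_in_grid_cube[OF assms, of UNIV]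
    Mcard_law_UNIV[OF prob_space_axioms measurable_L] card_cubes_pos
  by simp

end

theorem theorem9:
  fixes M :: "'a measure"
    and N :: "real^'n \<Rightarrow> real"
    and L :: "'a \<Rightarrow> real^'n^'n"
    and X Y :: "'a \<Rightarrow> real^'n"
    and \<delta>1 \<delta>2 :: real
    and \<C>1 \<C>2 :: "(real^'n) set set"
    and m :: "int^'n"
  assumes "prob_space M"
    and "is_norm N"
    and "\<delta>1 > 0" and "\<delta>2 > 0"
    and "finite \<C>1" and "\<C>1 \<noteq> {}" and "\<C>1 \<subseteq> range (grid_cube \<delta>1)"
    and "finite \<C>2" and "\<C>2 \<noteq> {}" and "\<C>2 \<subseteq> range (grid_cube \<delta>2)"
    and "L \<in> borel_measurable M" and "X \<in> borel_measurable M" and "Y \<in> borel_measurable M"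
    and "prob_space.indep_set M {L -` A \<inter> space M | A. A \<in> sets borel}
                                {X -` B \<inter> space M | B. B \<in> sets borel}"
    and "prob_space.indep_set M {L -` A \<inter> space M | A. A \<in> sets borel}
                                {Y -` B \<inter> space M | B. B \<in> sets borel}"
    and "\<forall>\<omega>\<in>space M. op_norm N (L \<omega>) < 1"
    and "distr M lborel X = uniform_measure lborel (\<Union>\<C>1)"
    and "distr M lborel Y = uniform_measure lborel (\<Union>\<C>2)"
    and "grid_cube \<delta>1 m \<in> \<C>1"
  shows "\<forall>k::nat.
    measure M {\<omega>\<in>space M. Mcard \<delta>2 (L \<omega>) (Y \<omega>) = k}
    = measure M {\<omega>\<in>space M. Mcard \<delta>1 (L \<omega>) (X \<omega>) = k \<and> X \<omega> \<in> grid_cube \<delta>1 m}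
      / measure M {\<omega>\<in>space M. X \<omega> \<in> grid_cube \<delta>1 m}"
proof
  fix k :: nat
  interpret X: uniform_grid_cubes M L X \<delta>1 \<C>1
    using assms by (simp add: uniform_grid_cubes_def uniform_grid_cubes_axioms_def)
  interpret Y: uniform_grid_cubes M L Y \<delta>2 \<C>2
    using assms by (simp add: uniform_grid_cubes_def uniform_grid_cubes_axioms_def)
  show "measure M {\<omega> \<in> space M. Mcard \<delta>2 (L \<omega>) (Y \<omega>) = k}
    = measure M {\<omega> \<in> space M. Mcard \<delta>1 (L \<omega>) (X \<omega>) = k \<and> X \<omega> \<in> grid_cube \<delta>1 m}
      / measure M {\<omega> \<in> space M. X \<omega> \<in> grid_cube \<delta>1 m}"
    using Y.measure_Mcard[of "{k}"] X.measure_Mcard_cond_grid_cube[OF assms(19), of "{k}"] by simp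
qed

end
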